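(* Let $M\ge 2$ be even, $T\ge 1$, $\mathcal{X}'=\{\pm1,\pm3,\ldots,\pm(M-1)\}$, $\mathcal{X}=\{x\in\mathbb{C}: \mathrm{Re}(x)\in\mathcal{X}',\ \mathrm{Im}(x)\in\mathcal{X}'\}$ (square $M^2$-QAM), and $\mathcal{C}=\mathcal{X}^T\subset\mathbb{C}^T$. Let $\mathbf{y}\in\mathbb{C}^T$, $\mathbf{y}\neq\mathbf 0$. Let $\mathbf{x}^{\mathrm{opt}}$ be any maximizer of $|\hat{\mathbf{x}}^\dagger\mathbf{y}|^2/\|\hat{\mathbf{x}}\|^2$ over $\hat{\mathbf{x}}\in\mathcal{C}$, let $h^{\mathrm{opt}}=(\mathbf{x}^{\mathrm{opt}})^\dagger\mathbf{y}/\|\mathbf{x}^{\mathrm{opt}}\|^2$ and $\lambda^{\mathrm{opt}}=1/h^{\mathrm{opt}}$. Then for all $t=1,\ldots,T$, $|\mathrm{Re}(\lambda^{\mathrm{opt}}y_t)|\le M+2T-2$ and $|\mathrm{Im}(\lambda^{\mathrm{opt}}y_t)|\le M+2T-2$.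
   Context: $(\cdot)^\dagger$ is the Hermitian transpose and $\|\cdot\|$ the Euclidean norm. This is noncoherent GLRT detection of $M^2$-ary square QAM codewords of length $T$ over a complex-valued block fading channel $\mathbf{y}=h\mathbf{x}+\mathbf{n}$; since $\mathbf{y}\neq\mathbf 0$ the maximum is positive so $h^{\mathrm{opt}}\neq 0$. *)

theory Defs
  imports "HOL-Analysis.Analysis"
begin

text \<open>Vectors in C^T are represented as functions nat => complex, components
  indexed by t < T (t = 0..T-1 corresponds to t = 1..T in the paper).\<close>

definition pam_alphabet :: "nat \<Rightarrow> real set" where
  "pam_alphabet M = {r. \<exists>k::int. r = of_int k \<and> odd k \<and> \<bar>k\<bar> \<le> int M - 1}"

definition qam_alphabet :: "nat \<Rightarrow> complex set" where
  "qam_alphabet M = {x. Re x \<in> pam_alphabet M \<and> Im x \<in> pam_alphabet M}"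

definition qam_codebook :: "nat \<Rightarrow> nat \<Rightarrow> (nat \<Rightarrow> complex) set" where
  "qam_codebook M T = {x. \<forall>t<T. x t \<in> qam_alphabet M}"

definition herm_inner :: "nat \<Rightarrow> (nat \<Rightarrow> complex) \<Rightarrow> (nat \<Rightarrow> complex) \<Rightarrow> complex" where
  "herm_inner T x y = (\<Sum>t<T. cnj (x t) * y t)"

definition vnorm2 :: "nat \<Rightarrow> (nat \<Rightarrow> complex) \<Rightarrow> real" where
  "vnorm2 T x = (\<Sum>t<T. (cmod (x t))^2)"

definition glrt_metric :: "nat \<Rightarrow> (nat \<Rightarrow> complex) \<Rightarrow> (nat \<Rightarrow> complex) \<Rightarrow> real" where
  "glrt_metric T y x = (cmod (herm_inner T x y))^2 / vnorm2 T x"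

end

theory Submission
  imports Defs
begin

(* Put lambda = 1/h_opt and z = lambda * y.  If h_opt = 0 then lambda = 0 and
   the bound is trivial; otherwise z is normalised so that <x_opt, z> = ||x_opt||^2, i.e.
   x_opt is its own least-squares scaling.  Scaling y does not change which codewords
   maximise the GLRT metric, and for every codeword w one has
   ||z - w||^2 >= ||z||^2 - metric(z, w), with equality for x_opt; hence x_opt is a nearest
   codeword to z.  Since the codebook is a product of QAM alphabets, and QAM a product of PAM
   alphabets, every real and imaginary component of x_opt is a nearest PAM point to the
   corresponding component of z.  Decision regions of PAM give, for a nearest point a to v,
   the lower bound a (v - a) >= -(M - 1) and |v| <= M - 1 + K whenever a (v - a) <= K (M - 1).
   Finally Re <x_opt, z> - ||x_opt||^2 = 0 writes zero as a sum of 2T such terms a (v - a),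
   so each one is at most (2T - 1)(M - 1), which yields |Re z_t|, |Im z_t| <= M + 2T - 2.
   The file develops: PAM arithmetic, one-dimensional decision regions, least-squares facts,
   the nearest-codeword property, the balancing argument, and finally the theorem. *)

lemma pam_alphabetE:
  assumes "r \<in> pam_alphabet M"
  obtains k :: int where "r = of_int k" "odd k" "\<bar>k\<bar> \<le> int M - 1"
  using assms unfolding pam_alphabet_def by auto

lemma pam_abs_bounds:
  assumes "r \<in> pam_alphabet M"
  shows "1 \<le> \<bar>r\<bar>" and "\<bar>r\<bar> \<le> real M - 1"
proof -
  obtain k where k: "r = of_int k" "odd k" "\<bar>k\<bar> \<le> int M - 1"
    using assms by (rule pam_alphabetE)
  then have "1 \<le> \<bar>k\<bar>" by presburger
  with k show "1 \<le> \<bar>r\<bar>" "\<bar>r\<bar> \<le> real M - 1" by linarith+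
qed

text \<open>For even \<open>M\<close> the alphabet is an arithmetic progression with step 2 from \<open>1 - M\<close> to
  \<open>M - 1\<close>: every point that is not the largest (smallest) has its upper (lower) neighbour.\<close>

lemma pam_step_up:
  assumes "even M" "r \<in> pam_alphabet M" "r < real M - 1"
  shows "r + 2 \<in> pam_alphabet M"
proof -
  obtain k where k: "r = of_int k" "odd k" "\<bar>k\<bar> \<le> int M - 1"
    using assms(2) by (rule pam_alphabetE)
  with assms(3) have "k < int M - 1" by simp
  with \<open>even M\<close> k have "k + 2 \<le> int M - 1" by presburger
  with k have "r + 2 = of_int (k + 2) \<and> odd (k + 2) \<and> \<bar>k + 2\<bar> \<le> int M - 1" by auto
  then show ?thesis unfolding pam_alphabet_def by blast
qed

lemma pam_step_down:
  assumes "even M" "r \<in> pam_alphabet M" "r > 1 - real M"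
  shows "r - 2 \<in> pam_alphabet M"
proof -
  obtain k where k: "r = of_int k" "odd k" "\<bar>k\<bar> \<le> int M - 1"
    using assms(2) by (rule pam_alphabetE)
  with assms(3) have "k > 1 - int M" by simp
  with \<open>even M\<close> k have "k - 2 \<ge> 1 - int M" by presburger
  with k have "r - 2 = of_int (k - 2) \<and> odd (k - 2) \<and> \<bar>k - 2\<bar> \<le> int M - 1" by auto
  then show ?thesis unfolding pam_alphabet_def by blast
qed

section \<open>Decision regions of PAM\<close>

definition pam_nearest :: "nat \<Rightarrow> real \<Rightarrow> real \<Rightarrow> bool" where
  "pam_nearest M a v \<longleftrightarrow> a \<in> pam_alphabet M \<and> (\<forall>b \<in> pam_alphabet M. (v - a)^2 \<le> (v - b)^2)"

lemma pam_nearest_residual: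
  assumes "even M" "pam_nearest M a v"
  shows "a < real M - 1 \<Longrightarrow> v - a \<le> 1" and "a > 1 - real M \<Longrightarrow> v - a \<ge> -1"
proof -
  have a: "a \<in> pam_alphabet M" and near: "\<And>b. b \<in> pam_alphabet M \<Longrightarrow> (v - a)^2 \<le> (v - b)^2"
    using assms(2) unfolding pam_nearest_def by auto
  show "v - a \<le> 1" if "a < real M - 1"
    using near[OF pam_step_up[OF assms(1) a that]] by (simp add: power2_eq_square algebra_simps)
  show "v - a \<ge> -1" if "a > 1 - real M"
    using near[OF pam_step_down[OF assms(1) a that]] by (simp add: power2_eq_square algebra_simps)
qed

lemma pam_nearest_correlation_lower:
  assumes "even M" "pam_nearest M a v"
  shows "a * (v - a) \<ge> - (real M - 1)"
proof -
  have a: "a \<in> pam_alphabet M" using assms(2) unfolding pam_nearest_def by simp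
  note bounds = pam_abs_bounds[OF a]
  note res = pam_nearest_residual[OF assms]
  show ?thesis
  proof (cases "a > 0")
    case True
    then have "v - a \<ge> -1" using res(2) bounds by linarith
    then have "a * (v - a) \<ge> a * (-1)" using True by (intro mult_left_mono) auto
    then show ?thesis using bounds by linarith
  next
    case False
    then have "v - a \<le> 1" using res(1) bounds by linarith
    then have "a * (v - a) \<ge> a * 1" using False by (intro mult_left_mono_neg) auto
    then show ?thesis using bounds by linarith
  qed
qed

text \<open>An upper bound on that correlation bounds the received value itself: at the extreme
  points the correlation controls the outward residual, elsewhere the residual is at most 1.\<close>

lemma pam_nearest_abs_bound:
  assumes "even M" "pam_nearest M a v" "a * (v - a) \<le> K * (real M - 1)" "K \<ge> 1"
  shows "\<bar>v\<bar> \<le> real M - 1 + K"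
proof -
  have a: "a \<in> pam_alphabet M" using assms(2) unfolding pam_nearest_def by simp
  note bounds = pam_abs_bounds[OF a]
  note res = pam_nearest_residual[OF assms(1,2)]
  have m: "real M - 1 \<ge> 1" using bounds by linarith
  consider "a = real M - 1" | "a = 1 - real M" | "\<bar>a\<bar> < real M - 1"
    using bounds by linarith
  then show ?thesis
  proof cases
    case 1
    then have "(real M - 1) * (v - a) \<le> (real M - 1) * K" using assms(3) by (simp add: mult.commute)
    then have "v - a \<le> K" using m by simp
    then show ?thesis using 1 res(2) m by linarith
  next
    case 2
    then have "(real M - 1) * (a - v) = a * (v - a)" by algebra
    then have "(real M - 1) * (a - v) \<le> (real M - 1) * K" using assms(3) by (simp add: mult.commute)
    then have "a - v \<le> K" using m by simp
    then show ?thesis using 2 res(1) m by linarith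
  next
    case 3
    then show ?thesis using res assms(4) by linarith
  qed
qed

definition sqdist :: "nat \<Rightarrow> (nat \<Rightarrow> complex) \<Rightarrow> (nat \<Rightarrow> complex) \<Rightarrow> real" where
  "sqdist T z w = (\<Sum>t<T. (cmod (z t - w t))^2)"

lemma sqdist_expand: "sqdist T z w = vnorm2 T z - 2 * Re (herm_inner T w z) + vnorm2 T w"
proof -
  have sq: "(cmod (a - b))^2 = (cmod a)^2 - 2 * Re (cnj b * a) + (cmod b)^2" for a b :: complex
    unfolding cmod_power2 by (simp add: power2_eq_square algebra_simps)
  show ?thesis unfolding sqdist_def vnorm2_def herm_inner_def
    by (simp add: sq sum.distrib sum_subtractf Re_sum sum_distrib_left)
qed

lemma qam_codeword_energy_pos:
  assumes "w \<in> qam_codebook M T" "T \<ge> 1"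
  shows "vnorm2 T w > 0"
  unfolding vnorm2_def
proof (rule sum_pos)
  fix t assume "t \<in> {..<T}"
  then have "Re (w t) \<in> pam_alphabet M"
    using assms(1) unfolding qam_codebook_def qam_alphabet_def by auto
  then have "w t \<noteq> 0" using pam_abs_bounds(1) by fastforce
  then show "(cmod (w t))^2 > 0" by simp
qed (use assms(2) in \<open>auto simp: lessThan_empty_iff\<close>)

text \<open>The GLRT metric of \<open>w\<close> is the energy of \<open>z\<close> explained by the best scaling of \<open>w\<close>;
  the distance to \<open>w\<close> itself can only be larger than the unexplained energy.\<close>

lemma sqdist_ge_unexplained:
  assumes "vnorm2 T w > 0"
  shows "vnorm2 T z - glrt_metric T z w \<le> sqdist T z w"
proof -
  define u where "u = herm_inner T w z"
  define n where "n = vnorm2 T w"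
  have n: "n > 0" using assms n_def by simp
  have "(Re u)^2 \<le> (cmod u)^2"
    using abs_Re_le_cmod[of u] by (metis abs_ge_zero power2_abs power_mono)
  then have "(Re u - n)^2 \<le> (cmod u)^2 - 2 * n * Re u + n^2"
    by (simp add: power2_eq_square algebra_simps)
  then have "0 \<le> ((cmod u)^2 - 2 * n * Re u + n^2) / n"
    using n by (intro divide_nonneg_pos) (auto intro: order.trans[OF zero_le_power2])
  also have "\<dots> = (cmod u)^2 / n - 2 * Re u + n"
    using n by (simp add: field_simps power2_eq_square)
  finally show ?thesis
    unfolding glrt_metric_def sqdist_expand u_def[symmetric] n_def[symmetric] by simp
qed

lemma normalised_codeword:
  assumes "herm_inner T w z = complex_of_real (vnorm2 T w)" "vnorm2 T w > 0"
  shows "glrt_metric T z w = vnorm2 T w" and "sqdist T z w = vnorm2 T z - vnorm2 T w"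
  using assms unfolding glrt_metric_def sqdist_expand by (simp_all add: power2_eq_square)

lemma glrt_maximiser_nearest:
  assumes x: "x \<in> qam_codebook M T" and T: "T \<ge> 1"
    and opt: "\<forall>w \<in> qam_codebook M T. glrt_metric T z w \<le> glrt_metric T z x"
    and norm: "herm_inner T x z = complex_of_real (vnorm2 T x)"
    and w: "w \<in> qam_codebook M T"
  shows "sqdist T z x \<le> sqdist T z w"
proof -
  note x_pos = qam_codeword_energy_pos[OF x T]
  have "sqdist T z x = vnorm2 T z - glrt_metric T z x"
    using normalised_codeword[OF norm x_pos] by simp
  also have "\<dots> \<le> vnorm2 T z - glrt_metric T z w" using opt w by simp
  also have "\<dots> \<le> sqdist T z w"
    by (rule sqdist_ge_unexplained[OF qam_codeword_energy_pos[OF w T]])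
  finally show ?thesis .
qed

lemma nearest_codeword_coordinate:
  assumes x: "x \<in> qam_codebook M T"
    and near: "\<forall>w \<in> qam_codebook M T. sqdist T z x \<le> sqdist T z w"
    and s: "s < T" and c: "c \<in> qam_alphabet M"
  shows "(cmod (z s - x s))^2 \<le> (cmod (z s - c))^2"
proof -
  define w where "w = x(s := c)"
  have "w \<in> qam_codebook M T" using x c unfolding w_def qam_codebook_def by auto
  with near have le: "sqdist T z x \<le> sqdist T z w" by blast
  have s': "s \<in> {..<T}" using s by simp
  define rest where "rest = (\<Sum>t\<in>{..<T}-{s}. (cmod (z t - x t))^2)"
  have "sqdist T z x = (cmod (z s - x s))^2 + rest"
    unfolding sqdist_def rest_def by (rule sum.remove[OF _ s']) simp
  moreover have "sqdist T z w = (cmod (z s - c))^2 + rest"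
    unfolding sqdist_def rest_def using sum.remove[OF _ s', of "\<lambda>t. (cmod (z t - w t))^2"]
    by (simp add: w_def)
  ultimately show ?thesis using le by simp
qed

lemma nearest_codeword_components:
  assumes x: "x \<in> qam_codebook M T"
    and near: "\<forall>w \<in> qam_codebook M T. sqdist T z x \<le> sqdist T z w"
    and s: "s < T"
  shows "pam_nearest M (Re (x s)) (Re (z s))" and "pam_nearest M (Im (x s)) (Im (z s))"
proof -
  have xs: "Re (x s) \<in> pam_alphabet M" "Im (x s) \<in> pam_alphabet M"
    using x s unfolding qam_codebook_def qam_alphabet_def by auto
  note coord = nearest_codeword_coordinate[OF x near s]
  show "pam_nearest M (Re (x s)) (Re (z s))"
    unfolding pam_nearest_def
  proof (intro conjI ballI)
    fix b assume "b \<in> pam_alphabet M"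
    then have "Complex b (Im (x s)) \<in> qam_alphabet M" using xs unfolding qam_alphabet_def by simp
    from coord[OF this] show "(Re (z s) - Re (x s))^2 \<le> (Re (z s) - b)^2"
      unfolding cmod_power2 by simp
  qed (rule xs(1))
  show "pam_nearest M (Im (x s)) (Im (z s))"
    unfolding pam_nearest_def
  proof (intro conjI ballI)
    fix b assume "b \<in> pam_alphabet M"
    then have "Complex (Re (x s)) b \<in> qam_alphabet M" using xs unfolding qam_alphabet_def by simp
    from coord[OF this] show "(Im (z s) - Im (x s))^2 \<le> (Im (z s) - b)^2"
      unfolding cmod_power2 by simp
  qed (rule xs(2))
qed

section \<open>The balancing argument\<close>

lemma term_le_sum_plus_slack:
  fixes f :: "'a \<Rightarrow> real"
  assumes "finite I" "\<forall>i\<in>I. f i \<ge> - m" "j \<in> I"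
  shows "f j \<le> sum f I + (real (card I) - 1) * m"
proof -
  have "of_nat (card (I - {j})) * (- m) \<le> sum f (I - {j})"
    using assms(2) by (intro sum_bounded_below) auto
  moreover have "sum f I = f j + sum f (I - {j})" by (rule sum.remove[OF assms(1,3)])
  moreover have "card (I - {j}) = card I - 1" "card I \<ge> 1"
    using assms by (auto simp: card_gt_0_iff Suc_le_eq)
  ultimately show ?thesis by (simp add: of_nat_diff algebra_simps)
qed

lemma normalised_correlation_sum:
  assumes "herm_inner T x z = complex_of_real (vnorm2 T x)"
  shows "(\<Sum>t<T. Re (x t) * (Re (z t) - Re (x t))) + (\<Sum>t<T. Im (x t) * (Im (z t) - Im (x t))) = 0"
proof -
  have pt: "Re (cnj a * b) - (cmod a)^2 = Re a * (Re b - Re a) + Im a * (Im b - Im a)"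
    for a b :: complex
    unfolding cmod_power2 by (simp add: power2_eq_square algebra_simps)
  have "(\<Sum>t<T. Re (cnj (x t) * z t) - (cmod (x t))^2) = Re (herm_inner T x z) - vnorm2 T x"
    unfolding herm_inner_def vnorm2_def by (simp add: Re_sum sum_subtractf)
  also have "\<dots> = 0" using assms by simp
  finally show ?thesis unfolding pt by (simp add: sum.distrib)
qed

lemma normalised_nearest_bound:
  assumes x: "x \<in> qam_codebook M T" and M: "even M"
    and near: "\<forall>w \<in> qam_codebook M T. sqdist T z x \<le> sqdist T z w"
    and norm: "herm_inner T x z = complex_of_real (vnorm2 T x)"
    and s: "s < T"
  shows "\<bar>Re (z s)\<bar> \<le> real M + 2 * real T - 2 \<and> \<bar>Im (z s)\<bar> \<le> real M + 2 * real T - 2"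
proof -
  define m where "m = real M - 1"
  define A where "A t = Re (x t) * (Re (z t) - Re (x t))" for t
  define B where "B t = Im (x t) * (Im (z t) - Im (x t))" for t
  note comp = nearest_codeword_components[OF x near]
  have A_lower: "\<forall>t\<in>{..<T}. A t \<ge> - m"
    unfolding A_def m_def using pam_nearest_correlation_lower[OF M comp(1)] by simp
  have B_lower: "\<forall>t\<in>{..<T}. B t \<ge> - m"
    unfolding B_def m_def using pam_nearest_correlation_lower[OF M comp(2)] by simp
  have balance: "sum A {..<T} + sum B {..<T} = 0"
    using normalised_correlation_sum[OF norm] unfolding A_def B_def .
  have sumA: "sum A {..<T} \<ge> real T * (- m)" and sumB: "sum B {..<T} \<ge> real T * (- m)"
    using sum_bounded_below[of "{..<T}" "- m"] A_lower B_lower by auto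
  have A_s: "A s \<le> (2 * real T - 1) * m"
    using term_le_sum_plus_slack[OF _ A_lower, of s] s balance sumB by (simp add: algebra_simps)
  have B_s: "B s \<le> (2 * real T - 1) * m"
    using term_le_sum_plus_slack[OF _ B_lower, of s] s balance sumA by (simp add: algebra_simps)
  have K: "2 * real T - 1 \<ge> 1" using s by simp
  have "\<bar>Re (z s)\<bar> \<le> real M - 1 + (2 * real T - 1)"
    by (rule pam_nearest_abs_bound[OF M comp(1)[OF s] _ K]) (use A_s in \<open>simp add: A_def m_def\<close>)
  moreover have "\<bar>Im (z s)\<bar> \<le> real M - 1 + (2 * real T - 1)"
    by (rule pam_nearest_abs_bound[OF M comp(2)[OF s] _ K]) (use B_s in \<open>simp add: B_def m_def\<close>)
  ultimately show ?thesis by simp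
qed

lemma glrt_metric_scale: "glrt_metric T (\<lambda>t. c * y t) x = (cmod c)^2 * glrt_metric T y x"
proof -
  have "herm_inner T x (\<lambda>t. c * y t) = c * herm_inner T x y"
    unfolding herm_inner_def by (simp add: sum_distrib_left algebra_simps)
  then show ?thesis unfolding glrt_metric_def by (simp add: norm_mult power_mult_distrib)
qed

theorem theorem2:
  fixes M T :: nat and y xopt :: "nat \<Rightarrow> complex"
  assumes "M \<ge> 2" and "even M" and "T \<ge> 1"
    and "\<exists>t<T. y t \<noteq> 0"
    and "xopt \<in> qam_codebook M T"
    and "\<forall>x \<in> qam_codebook M T. glrt_metric T y x \<le> glrt_metric T y xopt"
  shows "\<forall>t<T.
     let hopt = herm_inner T xopt y / complex_of_real (vnorm2 T xopt);
         lopt = 1 / hopt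
     in \<bar>Re (lopt * y t)\<bar> \<le> real M + 2 * real T - 2
      \<and> \<bar>Im (lopt * y t)\<bar> \<le> real M + 2 * real T - 2"
proof -
  define u where "u = herm_inner T xopt y"
  define N where "N = vnorm2 T xopt"
  define lopt where "lopt = 1 / (u / complex_of_real N)"
  define z where "z = (\<lambda>t. lopt * y t)"
  have N_pos: "N > 0" unfolding N_def by (rule qam_codeword_energy_pos[OF assms(5,3)])
  have bound: "\<bar>Re (z s)\<bar> \<le> real M + 2 * real T - 2 \<and> \<bar>Im (z s)\<bar> \<le> real M + 2 * real T - 2"
    if s: "s < T" for s
  proof (cases "u = 0")
    case True
    then show ?thesis using assms(1,3) by (simp add: z_def lopt_def)
  next
    case False
    have "herm_inner T xopt z = lopt * u"
      unfolding z_def u_def herm_inner_def by (simp add: sum_distrib_left algebra_simps)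
    then have norm: "herm_inner T xopt z = complex_of_real (vnorm2 T xopt)"
      using False N_pos by (simp add: lopt_def N_def)
    have "\<forall>w \<in> qam_codebook M T. glrt_metric T z w \<le> glrt_metric T z xopt"
      using assms(6) by (simp add: z_def glrt_metric_scale mult_left_mono)
    then have "\<forall>w \<in> qam_codebook M T. sqdist T z xopt \<le> sqdist T z w"
      using glrt_maximiser_nearest[OF assms(5,3) _ norm] by blast
    from normalised_nearest_bound[OF assms(5,2) this norm s] show ?thesis .
  qed
  then show ?thesis
    unfolding Let_def z_def lopt_def u_def N_def by blast
qed

end
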